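(* Let $f(X)=\frac12\langle X,\mathcal A(X)\rangle-\langle B^\star,X\rangle$ where $\mathcal A$ is a symmetric positive semidefinite linear operator on $\mathbb{R}^{m\times n}$, $B^\star=\mathcal A(M^\star)$ and $M^\star\in\mathcal M_k$. Suppose Assumption RPD$(M^\star,\beta)$ holds with $0\le\beta<1$. Then the Riemannian Hessian of $f$ at $M^\star$ (with $\mathcal M_k$ viewed as a Riemannian submanifold of $\mathbb{R}^{m\times n}$ with the Frobenius inner product, so that $\langle\operatorname{Hess}f(M^\star)[Z],Z\rangle=\frac{d^2}{dt^2}f(\operatorname{Exp}_{M^\star}(tZ))|_{t=0}$ for the exponential map $\operatorname{Exp}$) is positive definite: $$\min_{0\ne W\in T_{M^\star}\mathcal M_k}\frac{\langle\operatorname{Hess}f(M^\star)[W],W\rangle}{\|W\|_F^2}\ge 1-\beta>0.$$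
   Context: $\mathcal M_k$ is the set of real $m\times n$ matrices of rank exactly $k$, a smooth manifold; $\langle A,B\rangle=\operatorname{tr}(A^TB)$. Assumption RPD$(M^\star,\beta)$: $(1-\beta)\|X-M^\star\|_F^2\le\langle X-M^\star,\mathcal A(X-M^\star)\rangle\le(1+\beta)\|X-M^\star\|_F^2$ for all $X\in\mathcal M_k$. *)

theory Defs
  imports "HOL-Analysis.Analysis"
begin

text \<open>Real m x n matrices are the type real^'n^'m. The Euclidean inner product on this
type is x \<bullet> y = (sum over i,j of x$i$j * y$i$j) = tr(x^T y), i.e. the Frobenius inner
product, and norm is the Frobenius norm.\<close>

definition fixed_rank :: "nat \<Rightarrow> (real^'n^'m) set" where
  "fixed_rank k = {X. rank X = k}"

definition tangent_space :: "(real^'n^'m) set \<Rightarrow> real^'n^'m \<Rightarrow> (real^'n^'m) set" where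
  "tangent_space S x = {v. \<exists>(c::real \<Rightarrow> real^'n^'m) e. e > 0 \<and> c 0 = x \<and>
      (\<forall>t\<in>{-e<..<e}. c t \<in> S \<and> c differentiable (at t)) \<and>
      (c has_vector_derivative v) (at 0)}"

text \<open>Geodesic of S viewed as a Riemannian submanifold of the Euclidean space of matrices:
a twice differentiable curve on (-e,e) staying in S whose acceleration is normal to the
tangent space at every point.\<close>
definition submanifold_geodesic ::
  "(real^'n^'m) set \<Rightarrow> (real \<Rightarrow> real^'n^'m) \<Rightarrow> real \<Rightarrow> bool" where
  "submanifold_geodesic S c e \<longleftrightarrow> e > 0 \<and>
     (\<exists>c' c''. \<forall>t\<in>{-e<..<e}. c t \<in> S \<and>
        (c has_vector_derivative c' t) (at t) \<and>
        (c' has_vector_derivative c'' t) (at t) \<and>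
        (\<forall>v\<in>tangent_space S (c t). c'' t \<bullet> v = 0))"

text \<open>Quadratic form of the Riemannian Hessian along a geodesic c with c(0) = x, c'(0) = Z:
 d^2/dt^2 f(Exp_x(tZ)) at t = 0.\<close>
definition hess_quad_along :: "(real^'n^'m \<Rightarrow> real) \<Rightarrow> (real \<Rightarrow> real^'n^'m) \<Rightarrow> real" where
  "hess_quad_along f c = deriv (deriv (\<lambda>t. f (c t))) 0"

end

theory Submission
  imports Defs
begin

text \<open>At \<open>M\<^sup>*\<close> the Euclidean gradient \<open>\<A>(M\<^sup>*) - B\<^sup>*\<close> of \<open>f\<close> vanishes, so the
acceleration of the geodesic drops out and the Hessian quadratic form along a geodesic with
initial velocity \<open>W\<close> is just \<open>\<langle>W, \<A> W\<rangle>\<close>. Restricted-positive-definiteness applied to the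
points \<open>c(t)\<close> of the geodesic gives \<open>(1-\<beta>) \<parallel>(c(t) - M\<^sup>*)/t\<parallel>\<^sup>2 \<le> \<langle>(c(t) - M\<^sup>*)/t, \<A>((c(t) - M\<^sup>*)/t)\<rangle>\<close>,
and letting \<open>t \<rightarrow> 0\<close> turns the difference quotients into \<open>W\<close>.\<close>

lemma has_real_derivative_quadratic_objective:
  fixes A :: "'a::real_inner \<Rightarrow> 'a" and c :: "real \<Rightarrow> 'a"
  assumes bl: "bounded_linear A" and sym: "\<And>x y. x \<bullet> A y = A x \<bullet> y"
    and c: "(c has_vector_derivative v) (at t)"
  shows "((\<lambda>t. (1/2) * (c t \<bullet> A (c t)) - B \<bullet> c t) has_real_derivative v \<bullet> (A (c t) - B)) (at t)"
proof -
  have c': "(c has_derivative (\<lambda>h. h *\<^sub>R v)) (at t)"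
    using c by (simp add: has_vector_derivative_def)
  have Ac': "((\<lambda>t. A (c t)) has_derivative (\<lambda>h. A (h *\<^sub>R v))) (at t)"
    by (rule bounded_linear.has_derivative[OF bl c'])
  have "((\<lambda>t. (1/2) * (c t \<bullet> A (c t)) - B \<bullet> c t) has_derivative
      (\<lambda>h. (1/2) * (c t \<bullet> A (h *\<^sub>R v) + (h *\<^sub>R v) \<bullet> A (c t)) - B \<bullet> (h *\<^sub>R v))) (at t)"
    by (intro derivative_intros c' Ac')
  moreover have "c t \<bullet> A (h *\<^sub>R v) = h * (v \<bullet> A (c t))" for h
    using sym linear_simps(5)[OF bl] by (metis inner_commute inner_scaleR_right)
  ultimately show ?thesis
    unfolding has_field_derivative_def
    by (elim has_derivative_eq_rhs) (simp add: fun_eq_iff algebra_simps inner_commute)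
qed

lemma has_real_derivative_gradient_along_curve:
  fixes A :: "'a::real_inner \<Rightarrow> 'a" and c c' :: "real \<Rightarrow> 'a"
  assumes bl: "bounded_linear A"
    and c: "(c has_vector_derivative w) (at t)" and c': "(c' has_vector_derivative v) (at t)"
  shows "((\<lambda>t. c' t \<bullet> (A (c t) - B)) has_real_derivative v \<bullet> (A (c t) - B) + c' t \<bullet> A w) (at t)"
proof -
  have dc: "(c has_derivative (\<lambda>h. h *\<^sub>R w)) (at t)"
    and dc': "(c' has_derivative (\<lambda>h. h *\<^sub>R v)) (at t)"
    using c c' by (simp_all add: has_vector_derivative_def)
  have dAc: "((\<lambda>t. A (c t) - B) has_derivative (\<lambda>h. A (h *\<^sub>R w))) (at t)"
    using has_derivative_diff[OF bounded_linear.has_derivative[OF bl dc] has_derivative_const]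
    by simp
  have "((\<lambda>t. c' t \<bullet> (A (c t) - B)) has_derivative
      (\<lambda>h. c' t \<bullet> A (h *\<^sub>R w) + (h *\<^sub>R v) \<bullet> (A (c t) - B))) (at t)"
    by (rule has_derivative_inner[OF dc' dAc])
  then show ?thesis
    unfolding has_field_derivative_def
    by (rule has_derivative_eq_rhs) (simp add: fun_eq_iff linear_simps(5)[OF bl] algebra_simps)
qed

lemma second_derivative_quadratic_objective_along_curve:
  fixes A :: "'a::real_inner \<Rightarrow> 'a" and c c' c'' :: "real \<Rightarrow> 'a"
  assumes bl: "bounded_linear A" and sym: "\<And>x y. x \<bullet> A y = A x \<bullet> y" and "e > 0"
    and curve: "\<And>t. t \<in> {-e<..<e} \<Longrightarrow>
      (c has_vector_derivative c' t) (at t) \<and> (c' has_vector_derivative c'' t) (at t)"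
  shows "deriv (deriv (\<lambda>t. (1/2) * (c t \<bullet> A (c t)) - B \<bullet> c t)) 0
           = c'' 0 \<bullet> (A (c 0) - B) + c' 0 \<bullet> A (c' 0)"
proof -
  have 0: "0 \<in> {-e<..<e}" using \<open>e > 0\<close> by simp
  have first: "deriv (\<lambda>t. (1/2) * (c t \<bullet> A (c t)) - B \<bullet> c t) t = c' t \<bullet> (A (c t) - B)"
    if "t \<in> {-e<..<e}" for t
    using has_real_derivative_quadratic_objective[OF bl sym] curve[OF that] DERIV_imp_deriv
    by blast
  have "((\<lambda>t. c' t \<bullet> (A (c t) - B)) has_real_derivative
      c'' 0 \<bullet> (A (c 0) - B) + c' 0 \<bullet> A (c' 0)) (at 0)"
    using has_real_derivative_gradient_along_curve[OF bl] curve[OF 0] by blast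
  then have "(deriv (\<lambda>t. (1/2) * (c t \<bullet> A (c t)) - B \<bullet> c t) has_real_derivative
      c'' 0 \<bullet> (A (c 0) - B) + c' 0 \<bullet> A (c' 0)) (at 0)"
    by (rule has_field_derivative_transform_within_open[of _ _ _ "{-e<..<e}"])
      (use 0 first in auto)
  then show ?thesis by (rule DERIV_imp_deriv)
qed

lemma difference_quotient_tendsto_vector_derivative:
  fixes c :: "real \<Rightarrow> 'a::real_normed_vector"
  assumes "(c has_vector_derivative w) (at t)"
  shows "((\<lambda>s. (c s - c t) /\<^sub>R (s - t)) \<longlongrightarrow> w) (at t)"
proof -
  have "((\<lambda>s. ((c s - c t) - (s - t) *\<^sub>R w) /\<^sub>R norm (s - t)) \<longlongrightarrow> 0) (at t)"
    using assms unfolding has_vector_derivative_def has_derivative_at_within by blast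
  then have "((\<lambda>s. norm (((c s - c t) - (s - t) *\<^sub>R w) /\<^sub>R norm (s - t))) \<longlongrightarrow> 0) (at t)"
    by (rule tendsto_norm_zero)
  then have "((\<lambda>s. norm ((c s - c t) /\<^sub>R (s - t) - w)) \<longlongrightarrow> 0) (at t)"
  proof (rule Lim_transform_eventually)
    have "norm (((c s - c t) - (s - t) *\<^sub>R w) /\<^sub>R norm (s - t)) = norm ((c s - c t) /\<^sub>R (s - t) - w)"
      if "s \<noteq> t" for s
    proof -
      have "(c s - c t) /\<^sub>R (s - t) - w = inverse (s - t) *\<^sub>R ((c s - c t) - (s - t) *\<^sub>R w)"
        using that by (simp add: scaleR_diff_right)
      then show ?thesis by simp
    qed
    then show "\<forall>\<^sub>F s in at t. norm (((c s - c t) - (s - t) *\<^sub>R w) /\<^sub>R norm (s - t))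
        = norm ((c s - c t) /\<^sub>R (s - t) - w)"
      by (auto simp: eventually_at_filter)
  qed
  then show ?thesis
    by (rule tendsto_norm_zero_cancel[THEN LIM_zero_cancel])
qed

lemma quadratic_form_lower_bound_from_curve:
  fixes A :: "'a::real_inner \<Rightarrow> 'a" and c :: "real \<Rightarrow> 'a"
  assumes bl: "bounded_linear A" and c: "(c has_vector_derivative w) (at 0)"
    and bound: "\<forall>\<^sub>F t in at 0. \<kappa> * (norm (c t - c 0))\<^sup>2 \<le> (c t - c 0) \<bullet> A (c t - c 0)"
  shows "\<kappa> * (norm w)\<^sup>2 \<le> w \<bullet> A w"
proof -
  define D where "D t = (c t - c 0) /\<^sub>R t" for t
  have D: "(D \<longlongrightarrow> w) (at 0)"
    unfolding D_def using difference_quotient_tendsto_vector_derivative[OF c] by simp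
  have "\<forall>\<^sub>F t in at 0. \<kappa> * (norm (D t))\<^sup>2 \<le> D t \<bullet> A (D t)"
    using bound
  proof eventually_elim
    case (elim t)
    define X where "X = c t - c 0"
    have "(inverse t)\<^sup>2 * (\<kappa> * (norm X)\<^sup>2) \<le> (inverse t)\<^sup>2 * (X \<bullet> A X)"
      using elim unfolding X_def by (rule mult_left_mono) simp
    moreover have "D t = inverse t *\<^sub>R X"
      by (simp add: D_def X_def)
    then have "(norm (D t))\<^sup>2 = (inverse t)\<^sup>2 * (norm X)\<^sup>2"
      and "D t \<bullet> A (D t) = (inverse t)\<^sup>2 * (X \<bullet> A X)"
      by (simp_all add: linear_simps(5)[OF bl] power_mult_distrib power2_eq_square flip: abs_inverse)
    ultimately show ?case
      by (simp add: mult.left_commute)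
  qed
  moreover have "((\<lambda>t. D t \<bullet> A (D t)) \<longlongrightarrow> w \<bullet> A w) (at 0)"
    by (intro tendsto_inner D bounded_linear.tendsto[OF bl])
  moreover have "((\<lambda>t. \<kappa> * (norm (D t))\<^sup>2) \<longlongrightarrow> \<kappa> * (norm w)\<^sup>2) (at 0)"
    by (intro tendsto_intros D)
  ultimately show ?thesis
    by (intro tendsto_le[of "at 0"]) simp_all
qed

theorem lemma4p5:
  fixes \<A> :: "real^'n^'m \<Rightarrow> real^'n^'m"
    and Mstar :: "real^'n^'m"
    and k :: nat and \<beta> :: real
    and f :: "real^'n^'m \<Rightarrow> real"
  assumes lin: "linear \<A>"
    and sym: "\<forall>X Y. X \<bullet> \<A> Y = \<A> X \<bullet> Y"
    and psd: "\<forall>X. 0 \<le> X \<bullet> \<A> X"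
    and f_def: "\<forall>X. f X = (1/2) * (X \<bullet> \<A> X) - \<A> Mstar \<bullet> X"
    and Mstar_rank: "Mstar \<in> fixed_rank k"
    and RPD: "\<forall>X\<in>fixed_rank k.
                (1 - \<beta>) * (norm (X - Mstar))\<^sup>2 \<le> (X - Mstar) \<bullet> \<A> (X - Mstar) \<and>
                (X - Mstar) \<bullet> \<A> (X - Mstar) \<le> (1 + \<beta>) * (norm (X - Mstar))\<^sup>2"
    and beta: "0 \<le> \<beta>" "\<beta> < 1"
  shows "(\<forall>W\<in>tangent_space (fixed_rank k) Mstar. \<forall>c e.
            W \<noteq> 0 \<and> submanifold_geodesic (fixed_rank k) c e \<and> c 0 = Mstar \<and>
            (c has_vector_derivative W) (at 0)
            \<longrightarrow> 1 - \<beta> \<le> hess_quad_along f c / (norm W)\<^sup>2)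
         \<and> 1 - \<beta> > 0"
proof -
  have bl: "bounded_linear \<A>" using lin by (simp add: linear_conv_bounded_linear)
  have "1 - \<beta> \<le> hess_quad_along f c / (norm W)\<^sup>2"
    if "W \<noteq> 0" and geo: "submanifold_geodesic (fixed_rank k) c e" and c0: "c 0 = Mstar"
      and W: "(c has_vector_derivative W) (at 0)" for W c e
  proof -
    obtain c' c'' where e: "e > 0" and curve: "\<forall>t\<in>{-e<..<e}. c t \<in> fixed_rank k \<and>
        (c has_vector_derivative c' t) (at t) \<and> (c' has_vector_derivative c'' t) (at t)"
      using geo unfolding submanifold_geodesic_def by blast
    have "0 \<in> {-e<..<e}" using e by simp
    then have "c' 0 = W" using curve W vector_derivative_unique_at by blast
    then have hess: "hess_quad_along f c = W \<bullet> \<A> W"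
      using second_derivative_quadratic_objective_along_curve[OF bl _ e, of c c' c'' "\<A> Mstar"]
        sym curve c0 f_def by (simp add: hess_quad_along_def)
    have "\<forall>\<^sub>F t in at 0. c t \<in> fixed_rank k"
      using curve e by (auto simp: eventually_at abs_less_iff intro!: exI[of _ e])
    then have "\<forall>\<^sub>F t in at 0. (1 - \<beta>) * (norm (c t - c 0))\<^sup>2 \<le> (c t - c 0) \<bullet> \<A> (c t - c 0)"
      by eventually_elim (use RPD c0 in blast)
    then have "(1 - \<beta>) * (norm W)\<^sup>2 \<le> W \<bullet> \<A> W"
      by (rule quadratic_form_lower_bound_from_curve[OF bl W])
    then show ?thesis using \<open>W \<noteq> 0\<close> hess by (simp add: le_divide_eq)
  qed
  then show ?thesis using beta by auto
qed

end
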